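(* Assume $c_i=c>0$, $\gamma_i=\gamma>0$, $\nu_i=\nu>0$, $\rho_i=\rho\in(-1,1)$ for all $i$. Then the unique maximiser $(z^{Q,\star},z^{S,\star})$ of $f$ is symmetric: there are reals $z^\star_{s,n},z^\star_{d,n}$ and (for $n\ge2$) $z^\star_{o,n}$ with $z^{S,i,\star}=z^\star_{s,n}$, $z^{Q,i,i,\star}=z^\star_{d,n}$, $z^{Q,i,j,\star}=z^\star_{o,n}$ for $j\ne i$, and $\Delta_n(\gamma_{\rm P})>0$ and $$z^\star_{s,n}=-\frac{\rho\gamma}{Ac\sigma\nu\sqrt n\,\Delta_n(\gamma_{\rm P})}\Big(1-\frac{\gamma_{\rm P}}{n\widetilde\kappa_n}\Big),$$ $$z^\star_{o,n}=\frac1\nu\big(\alpha_nK_n^\star-\beta_nz^\star_{s,n}\big)\ (n\ge2),\qquad z^\star_{d,n}=\frac{1}{\nu A}\Big(\frac{\gamma_{\rm P}}{n}K_n^\star-\gamma\beta_nz^\star_{s,n}+\frac{1}{c\nu}\Big),$$ where $K_n^\star=\frac1{\kappa_n}\Big(\frac{\gamma\nu}{A}-\beta_n\delta z^\star_{s,n}\Big)$.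
   Context: Fix an integer $n\ge1$ and parameters $\sigma>0$, $\gamma_{\rm P}>0$, and for each $i\in\{1,\dots,n\}$: $c_i>0$, $\gamma_i>0$, $\nu_i>0$, $\rho_i\in(-1,1)$. Write $\nu=(\nu_1,\dots,\nu_n)^\top$, $\rho=(\rho_1,\dots,\rho_n)^\top$. The variables are a matrix $z^Q=(z^{Q,i,j})_{i,j}\in\mathbb{R}^{n\times n}$ ($i$ row, $j$ column) and a vector $z^S=(z^{S,1},\dots,z^{S,n})^\top\in\mathbb{R}^n$. Define $f:\mathbb{R}^{n\times n}\times\mathbb{R}^n\to\mathbb{R}$ by $$f(z^Q,z^S)=-\frac1n\sum_{i=1}^n\Big(\frac{(z^{Q,i,i})^2}{2c_i}+\frac{\gamma_i}{2}\sum_{j=1}^n\nu_j^2(z^{Q,i,j})^2+\frac{\gamma_i\sigma^2}{2}(z^{S,i})^2+\frac{\gamma_i\sigma}{\sqrt n}z^{S,i}\sum_{j=1}^n\rho_j\nu_jz^{Q,i,j}-\frac{z^{Q,i,i}}{c_i}\Big)-\frac{\gamma_{\rm P}}{2n^2}\sum_{i=1}^n\Big(\Big(\nu_i-\nu_i\sum_{j=1}^nz^{Q,j,i}-\frac{\rho_i\sigma}{\sqrt n}\sum_{j=1}^nz^{S,j}\Big)^2+\frac{(1-\rho_i^2)\sigma^2}{n}\Big(\sum_{j=1}^nz^{S,j}\Big)^2\Big).$$ $f$ has a unique global maximiser $(z^{Q,\star},z^{S,\star})$. In the homogeneous case define $A=\gamma+\frac{1}{c\nu^2}$, $\delta=1-\frac{\gamma}{A}=\frac{1}{Ac\nu^2}$,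 $\alpha_n=\frac{\gamma_{\rm P}}{n\gamma}$, $\beta_n=\frac{\sigma\rho}{\sqrt n}$, $\widetilde\kappa_n=A+\frac{\gamma_{\rm P}}{n}\Big(\frac{(n-1)A}{\gamma}+1\Big)$, $\kappa_n=\widetilde\kappa_n/A$, and $$\Delta_n(\gamma_{\rm P})=(\gamma+\gamma_{\rm P})(1-\rho^2)+\frac{\gamma\rho^2\delta}{n}+\frac{\gamma_{\rm P}\rho^2\delta^2}{n^2\kappa_n}.$$ *)

theory Defs
  imports Complex_Main
begin

text \<open>Matrices/vectors indexed by 0..<n (row index first). Entries outside the range are
irrelevant to the objective.\<close>

definition objf ::
  "nat \<Rightarrow> real \<Rightarrow> real \<Rightarrow> (nat \<Rightarrow> real) \<Rightarrow> (nat \<Rightarrow> real) \<Rightarrow> (nat \<Rightarrow> real)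
   \<Rightarrow> (nat \<Rightarrow> real) \<Rightarrow> (nat \<Rightarrow> nat \<Rightarrow> real) \<Rightarrow> (nat \<Rightarrow> real) \<Rightarrow> real" where
  "objf n \<sigma> \<gamma>P c \<gamma> \<nu> \<rho> zQ zS =
     - (1 / real n) * (\<Sum>i<n.
          (zQ i i)\<^sup>2 / (2 * c i)
        + \<gamma> i / 2 * (\<Sum>j<n. (\<nu> j)\<^sup>2 * (zQ i j)\<^sup>2)
        + \<gamma> i * \<sigma>\<^sup>2 / 2 * (zS i)\<^sup>2
        + \<gamma> i * \<sigma> / sqrt (real n) * zS i * (\<Sum>j<n. \<rho> j * \<nu> j * zQ i j)
        - zQ i i / c i)
     - \<gamma>P / (2 * (real n)\<^sup>2) * (\<Sum>i<n.
          (\<nu> i - \<nu> i * (\<Sum>j<n. zQ j i) - \<rho> i * \<sigma> / sqrt (real n) * (\<Sum>j<n. zS j))\<^sup>2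
        + (1 - (\<rho> i)\<^sup>2) * \<sigma>\<^sup>2 / real n * (\<Sum>j<n. zS j)\<^sup>2)"

definition is_maximiser ::
  "nat \<Rightarrow> real \<Rightarrow> real \<Rightarrow> (nat \<Rightarrow> real) \<Rightarrow> (nat \<Rightarrow> real) \<Rightarrow> (nat \<Rightarrow> real)
   \<Rightarrow> (nat \<Rightarrow> real) \<Rightarrow> (nat \<Rightarrow> nat \<Rightarrow> real) \<Rightarrow> (nat \<Rightarrow> real) \<Rightarrow> bool" where
  "is_maximiser n \<sigma> \<gamma>P c \<gamma> \<nu> \<rho> zQ zS \<longleftrightarrow>
     (\<forall>zQ' zS'. objf n \<sigma> \<gamma>P c \<gamma> \<nu> \<rho> zQ' zS' \<le> objf n \<sigma> \<gamma>P c \<gamma> \<nu> \<rho> zQ zS)"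

definition hA :: "real \<Rightarrow> real \<Rightarrow> real \<Rightarrow> real" where
  "hA c \<gamma> \<nu> = \<gamma> + 1 / (c * \<nu>\<^sup>2)"

definition h\<delta> :: "real \<Rightarrow> real \<Rightarrow> real \<Rightarrow> real" where
  "h\<delta> c \<gamma> \<nu> = 1 / (hA c \<gamma> \<nu> * c * \<nu>\<^sup>2)"

definition h\<alpha> :: "nat \<Rightarrow> real \<Rightarrow> real \<Rightarrow> real" where
  "h\<alpha> n \<gamma>P \<gamma> = \<gamma>P / (real n * \<gamma>)"

definition h\<beta> :: "nat \<Rightarrow> real \<Rightarrow> real \<Rightarrow> real" where
  "h\<beta> n \<sigma> \<rho> = \<sigma> * \<rho> / sqrt (real n)"

definition h\<kappa>t :: "nat \<Rightarrow> real \<Rightarrow> real \<Rightarrow> real \<Rightarrow> real \<Rightarrow> real" where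
  "h\<kappa>t n \<gamma>P c \<gamma> \<nu> = hA c \<gamma> \<nu>
     + \<gamma>P / real n * ((real n - 1) * hA c \<gamma> \<nu> / \<gamma> + 1)"

definition h\<kappa> :: "nat \<Rightarrow> real \<Rightarrow> real \<Rightarrow> real \<Rightarrow> real \<Rightarrow> real" where
  "h\<kappa> n \<gamma>P c \<gamma> \<nu> = h\<kappa>t n \<gamma>P c \<gamma> \<nu> / hA c \<gamma> \<nu>"

definition h\<Delta> :: "nat \<Rightarrow> real \<Rightarrow> real \<Rightarrow> real \<Rightarrow> real \<Rightarrow> real \<Rightarrow> real" where
  "h\<Delta> n \<gamma>P c \<gamma> \<nu> \<rho> = (\<gamma> + \<gamma>P) * (1 - \<rho>\<^sup>2)
     + \<gamma> * \<rho>\<^sup>2 * h\<delta> c \<gamma> \<nu> / real n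
     + \<gamma>P * \<rho>\<^sup>2 * (h\<delta> c \<gamma> \<nu>)\<^sup>2 / ((real n)\<^sup>2 * h\<kappa> n \<gamma>P c \<gamma> \<nu>)"

end

theory Submission
  imports Defs
begin

(* f is a quadratic function of (zQ, zS). Writing it as -(1/n) times a sum of own terms minus
   gammaP/(2 n^2) times a sum of penalty terms, its second-order Taylor expansion is exact, and the
   quadratic part is positive definite: completing the square in each own term leaves the
   coefficient (1 - mean of rho_j^2) sigma^2 > 0 in front of zS_i^2. Hence a critical point of f is
   its unique maximiser. In the homogeneous case we look for a critical point that is constant on
   the diagonal, off the diagonal and along zS; the first-order conditions reduce to three scalar
   linear equations, which the closed-form values are checked to solve. *)

definition own_term ::
  "nat \<Rightarrow> real \<Rightarrow> (nat \<Rightarrow> real) \<Rightarrow> (nat \<Rightarrow> real) \<Rightarrow> (nat \<Rightarrow> real) \<Rightarrow> (nat \<Rightarrow> real)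
   \<Rightarrow> (nat \<Rightarrow> nat \<Rightarrow> real) \<Rightarrow> (nat \<Rightarrow> real) \<Rightarrow> nat \<Rightarrow> real" where
  "own_term n \<sigma> c \<gamma> \<nu> \<rho> zQ zS i =
     (zQ i i)\<^sup>2 / (2 * c i)
     + \<gamma> i / 2 * (\<Sum>j<n. (\<nu> j)\<^sup>2 * (zQ i j)\<^sup>2)
     + \<gamma> i * \<sigma>\<^sup>2 / 2 * (zS i)\<^sup>2
     + \<gamma> i * \<sigma> / sqrt (real n) * zS i * (\<Sum>j<n. \<rho> j * \<nu> j * zQ i j)
     - zQ i i / c i"

definition penalty_term ::
  "nat \<Rightarrow> real \<Rightarrow> (nat \<Rightarrow> real) \<Rightarrow> (nat \<Rightarrow> real) \<Rightarrow> (nat \<Rightarrow> nat \<Rightarrow> real) \<Rightarrow> (nat \<Rightarrow> real)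
   \<Rightarrow> nat \<Rightarrow> real" where
  "penalty_term n \<sigma> \<nu> \<rho> zQ zS i =
     (\<nu> i - \<nu> i * (\<Sum>j<n. zQ j i) - \<rho> i * \<sigma> / sqrt (real n) * (\<Sum>j<n. zS j))\<^sup>2
     + (1 - (\<rho> i)\<^sup>2) * \<sigma>\<^sup>2 / real n * (\<Sum>j<n. zS j)\<^sup>2"

lemma objf_eq_terms:
  "objf n \<sigma> \<gamma>P c \<gamma> \<nu> \<rho> zQ zS =
     - (1 / real n) * (\<Sum>i<n. own_term n \<sigma> c \<gamma> \<nu> \<rho> zQ zS i)
     - \<gamma>P / (2 * (real n)\<^sup>2) * (\<Sum>i<n. penalty_term n \<sigma> \<nu> \<rho> zQ zS i)"
  unfolding objf_def own_term_def penalty_term_def ..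

definition own_term_deriv ::
  "nat \<Rightarrow> real \<Rightarrow> (nat \<Rightarrow> real) \<Rightarrow> (nat \<Rightarrow> real) \<Rightarrow> (nat \<Rightarrow> real) \<Rightarrow> (nat \<Rightarrow> real)
   \<Rightarrow> (nat \<Rightarrow> nat \<Rightarrow> real) \<Rightarrow> (nat \<Rightarrow> real) \<Rightarrow> (nat \<Rightarrow> nat \<Rightarrow> real) \<Rightarrow> (nat \<Rightarrow> real) \<Rightarrow> nat \<Rightarrow> real" where
  "own_term_deriv n \<sigma> c \<gamma> \<nu> \<rho> zQ zS dQ dS i =
     zQ i i * dQ i i / c i
     + \<gamma> i * (\<Sum>j<n. (\<nu> j)\<^sup>2 * zQ i j * dQ i j)
     + \<gamma> i * \<sigma>\<^sup>2 * zS i * dS i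
     + \<gamma> i * \<sigma> / sqrt (real n) * (zS i * (\<Sum>j<n. \<rho> j * \<nu> j * dQ i j) + dS i * (\<Sum>j<n. \<rho> j * \<nu> j * zQ i j))
     - dQ i i / c i"

definition own_term_quad ::
  "nat \<Rightarrow> real \<Rightarrow> (nat \<Rightarrow> real) \<Rightarrow> (nat \<Rightarrow> real) \<Rightarrow> (nat \<Rightarrow> real) \<Rightarrow> (nat \<Rightarrow> real)
   \<Rightarrow> (nat \<Rightarrow> nat \<Rightarrow> real) \<Rightarrow> (nat \<Rightarrow> real) \<Rightarrow> nat \<Rightarrow> real" where
  "own_term_quad n \<sigma> c \<gamma> \<nu> \<rho> dQ dS i =
     (dQ i i)\<^sup>2 / (2 * c i)
     + \<gamma> i / 2 * (\<Sum>j<n. (\<nu> j)\<^sup>2 * (dQ i j)\<^sup>2)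
     + \<gamma> i * \<sigma>\<^sup>2 / 2 * (dS i)\<^sup>2
     + \<gamma> i * \<sigma> / sqrt (real n) * dS i * (\<Sum>j<n. \<rho> j * \<nu> j * dQ i j)"

definition penalty_term_deriv ::
  "nat \<Rightarrow> real \<Rightarrow> (nat \<Rightarrow> real) \<Rightarrow> (nat \<Rightarrow> real) \<Rightarrow> (nat \<Rightarrow> nat \<Rightarrow> real) \<Rightarrow> (nat \<Rightarrow> real)
   \<Rightarrow> (nat \<Rightarrow> nat \<Rightarrow> real) \<Rightarrow> (nat \<Rightarrow> real) \<Rightarrow> nat \<Rightarrow> real" where
  "penalty_term_deriv n \<sigma> \<nu> \<rho> zQ zS dQ dS i =
     - 2 * (\<nu> i - \<nu> i * (\<Sum>j<n. zQ j i) - \<rho> i * \<sigma> / sqrt (real n) * (\<Sum>j<n. zS j))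
         * (\<nu> i * (\<Sum>j<n. dQ j i) + \<rho> i * \<sigma> / sqrt (real n) * (\<Sum>j<n. dS j))
     + 2 * (1 - (\<rho> i)\<^sup>2) * \<sigma>\<^sup>2 / real n * (\<Sum>j<n. zS j) * (\<Sum>j<n. dS j)"

definition penalty_term_quad ::
  "nat \<Rightarrow> real \<Rightarrow> (nat \<Rightarrow> real) \<Rightarrow> (nat \<Rightarrow> real) \<Rightarrow> (nat \<Rightarrow> nat \<Rightarrow> real) \<Rightarrow> (nat \<Rightarrow> real)
   \<Rightarrow> nat \<Rightarrow> real" where
  "penalty_term_quad n \<sigma> \<nu> \<rho> dQ dS i =
     (\<nu> i * (\<Sum>j<n. dQ j i) + \<rho> i * \<sigma> / sqrt (real n) * (\<Sum>j<n. dS j))\<^sup>2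
     + (1 - (\<rho> i)\<^sup>2) * \<sigma>\<^sup>2 / real n * (\<Sum>j<n. dS j)\<^sup>2"

definition objf_deriv ::
  "nat \<Rightarrow> real \<Rightarrow> real \<Rightarrow> (nat \<Rightarrow> real) \<Rightarrow> (nat \<Rightarrow> real) \<Rightarrow> (nat \<Rightarrow> real) \<Rightarrow> (nat \<Rightarrow> real)
   \<Rightarrow> (nat \<Rightarrow> nat \<Rightarrow> real) \<Rightarrow> (nat \<Rightarrow> real) \<Rightarrow> (nat \<Rightarrow> nat \<Rightarrow> real) \<Rightarrow> (nat \<Rightarrow> real) \<Rightarrow> real" where
  "objf_deriv n \<sigma> \<gamma>P c \<gamma> \<nu> \<rho> zQ zS dQ dS =
     - (1 / real n) * (\<Sum>i<n. own_term_deriv n \<sigma> c \<gamma> \<nu> \<rho> zQ zS dQ dS i)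
     - \<gamma>P / (2 * (real n)\<^sup>2) * (\<Sum>i<n. penalty_term_deriv n \<sigma> \<nu> \<rho> zQ zS dQ dS i)"

definition objf_quad ::
  "nat \<Rightarrow> real \<Rightarrow> real \<Rightarrow> (nat \<Rightarrow> real) \<Rightarrow> (nat \<Rightarrow> real) \<Rightarrow> (nat \<Rightarrow> real)
   \<Rightarrow> (nat \<Rightarrow> real) \<Rightarrow> (nat \<Rightarrow> nat \<Rightarrow> real) \<Rightarrow> (nat \<Rightarrow> real) \<Rightarrow> real" where
  "objf_quad n \<sigma> \<gamma>P c \<gamma> \<nu> \<rho> dQ dS =
     (1 / real n) * (\<Sum>i<n. own_term_quad n \<sigma> c \<gamma> \<nu> \<rho> dQ dS i)
     + \<gamma>P / (2 * (real n)\<^sup>2) * (\<Sum>i<n. penalty_term_quad n \<sigma> \<nu> \<rho> dQ dS i)"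

lemma own_term_taylor:
  "own_term n \<sigma> c \<gamma> \<nu> \<rho> (\<lambda>i j. zQ i j + dQ i j) (\<lambda>i. zS i + dS i) i
   = own_term n \<sigma> c \<gamma> \<nu> \<rho> zQ zS i + own_term_deriv n \<sigma> c \<gamma> \<nu> \<rho> zQ zS dQ dS i
     + own_term_quad n \<sigma> c \<gamma> \<nu> \<rho> dQ dS i"
  unfolding own_term_def own_term_deriv_def own_term_quad_def
  by (simp add: power2_sum sum.distrib sum_distrib_left algebra_simps add_divide_distrib diff_divide_distrib)

lemma penalty_term_taylor:
  "penalty_term n \<sigma> \<nu> \<rho> (\<lambda>i j. zQ i j + dQ i j) (\<lambda>i. zS i + dS i) i
   = penalty_term n \<sigma> \<nu> \<rho> zQ zS i + penalty_term_deriv n \<sigma> \<nu> \<rho> zQ zS dQ dS i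
     + penalty_term_quad n \<sigma> \<nu> \<rho> dQ dS i"
  unfolding penalty_term_def penalty_term_deriv_def penalty_term_quad_def
  by (simp add: sum.distrib power2_eq_square algebra_simps)

lemma objf_taylor:
  "objf n \<sigma> \<gamma>P c \<gamma> \<nu> \<rho> (\<lambda>i j. zQ i j + dQ i j) (\<lambda>i. zS i + dS i)
   = objf n \<sigma> \<gamma>P c \<gamma> \<nu> \<rho> zQ zS + objf_deriv n \<sigma> \<gamma>P c \<gamma> \<nu> \<rho> zQ zS dQ dS
     - objf_quad n \<sigma> \<gamma>P c \<gamma> \<nu> \<rho> dQ dS"
  unfolding objf_eq_terms objf_deriv_def objf_quad_def own_term_taylor penalty_term_taylor
  by (simp add: sum.distrib algebra_simps)

definition admissible_params ::
  "nat \<Rightarrow> real \<Rightarrow> real \<Rightarrow> (nat \<Rightarrow> real) \<Rightarrow> (nat \<Rightarrow> real) \<Rightarrow> (nat \<Rightarrow> real) \<Rightarrow> (nat \<Rightarrow> real) \<Rightarrow> bool" where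
  "admissible_params n \<sigma> \<gamma>P c \<gamma> \<nu> \<rho> \<longleftrightarrow>
     \<sigma> > 0 \<and> \<gamma>P > 0 \<and> (\<forall>i<n. c i > 0 \<and> \<gamma> i > 0 \<and> \<nu> i > 0 \<and> \<bar>\<rho> i\<bar> < 1)"

lemma mean_square_less_1:
  fixes \<rho> :: "nat \<Rightarrow> real"
  assumes "\<And>j. j < n \<Longrightarrow> \<bar>\<rho> j\<bar> < 1"
  shows "(\<Sum>j<n. (\<rho> j)\<^sup>2) / real n < 1"
proof (cases "n = 0")
  case False
  have "(\<Sum>j<n. (\<rho> j)\<^sup>2) < (\<Sum>j<n. 1)"
    using False assms by (intro sum_strict_mono) (auto simp: abs_square_less_1)
  then show ?thesis
    using False by simp
qed simp

lemma own_term_quad_complete_square: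
  "own_term_quad n \<sigma> c \<gamma> \<nu> \<rho> dQ dS i
   = (dQ i i)\<^sup>2 / (2 * c i) + \<gamma> i / 2 * ((\<Sum>j<n. (\<nu> j * dQ i j + \<rho> j * \<sigma> * dS i / sqrt (real n))\<^sup>2)
       + (1 - (\<Sum>j<n. (\<rho> j)\<^sup>2) / real n) * \<sigma>\<^sup>2 * (dS i)\<^sup>2)"
proof -
  have "(\<Sum>j<n. (\<nu> j * dQ i j + \<rho> j * \<sigma> * dS i / sqrt (real n))\<^sup>2)
      = (\<Sum>j<n. (\<nu> j)\<^sup>2 * (dQ i j)\<^sup>2) + 2 * \<sigma> * dS i / sqrt (real n) * (\<Sum>j<n. \<rho> j * \<nu> j * dQ i j)
        + (\<Sum>j<n. (\<rho> j)\<^sup>2) * \<sigma>\<^sup>2 * (dS i)\<^sup>2 / real n"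
    by (simp add: power2_sum sum.distrib sum_distrib_left sum_distrib_right sum_divide_distrib
        power_divide algebra_simps)
  then show ?thesis
    unfolding own_term_quad_def by (simp add: algebra_simps add_divide_distrib diff_divide_distrib)
qed

lemma own_term_quad_nonneg:
  assumes "admissible_params n \<sigma> \<gamma>P c \<gamma> \<nu> \<rho>" and "i < n"
  shows "0 \<le> own_term_quad n \<sigma> c \<gamma> \<nu> \<rho> dQ dS i"
  unfolding own_term_quad_complete_square using assms mean_square_less_1[of n \<rho>]
  unfolding admissible_params_def by (intro add_nonneg_nonneg mult_nonneg_nonneg sum_nonneg) auto

lemma own_term_quad_eq_0D:
  assumes adm: "admissible_params n \<sigma> \<gamma>P c \<gamma> \<nu> \<rho>" and "i < n"
    and zero: "own_term_quad n \<sigma> c \<gamma> \<nu> \<rho> dQ dS i = 0"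
  shows "dS i = 0" and "\<forall>j<n. dQ i j = 0"
proof -
  define B where "B = (\<Sum>j<n. (\<nu> j * dQ i j + \<rho> j * \<sigma> * dS i / sqrt (real n))\<^sup>2)"
  define m where "m = 1 - (\<Sum>j<n. (\<rho> j)\<^sup>2) / real n"
  have pos: "\<sigma> > 0" "c i > 0" "\<gamma> i > 0" "\<forall>j<n. \<nu> j > 0" "m > 0"
    using adm \<open>i < n\<close> mean_square_less_1[of n \<rho>] unfolding admissible_params_def m_def by auto
  have B_nonneg: "0 \<le> B"
    unfolding B_def by (rule sum_nonneg) simp
  have C_nonneg: "0 \<le> m * \<sigma>\<^sup>2 * (dS i)\<^sup>2"
    using pos by simp
  have "(dQ i i)\<^sup>2 / (2 * c i) + \<gamma> i / 2 * (B + m * \<sigma>\<^sup>2 * (dS i)\<^sup>2) = 0"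
    using zero unfolding own_term_quad_complete_square B_def m_def .
  moreover have "0 \<le> (dQ i i)\<^sup>2 / (2 * c i)" and "0 \<le> \<gamma> i / 2 * (B + m * \<sigma>\<^sup>2 * (dS i)\<^sup>2)"
    using pos B_nonneg C_nonneg by simp_all
  ultimately have "\<gamma> i / 2 * (B + m * \<sigma>\<^sup>2 * (dS i)\<^sup>2) = 0"
    by linarith
  then have "B = 0" and "m * \<sigma>\<^sup>2 * (dS i)\<^sup>2 = 0"
    using pos B_nonneg C_nonneg by (simp_all add: add_nonneg_eq_0_iff)
  then show "dS i = 0"
    using pos by simp
  show "\<forall>j<n. dQ i j = 0"
  proof (intro allI impI)
    fix j
    assume "j < n"
    then have "(\<nu> j * dQ i j + \<rho> j * \<sigma> * dS i / sqrt (real n))\<^sup>2 = 0"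
      using \<open>B = 0\<close> unfolding B_def by (simp add: sum_nonneg_eq_0_iff)
    moreover have "\<nu> j > 0"
      using pos(4) \<open>j < n\<close> by blast
    ultimately show "dQ i j = 0"
      using \<open>dS i = 0\<close> by simp
  qed
qed

lemma penalty_term_quad_nonneg:
  assumes "admissible_params n \<sigma> \<gamma>P c \<gamma> \<nu> \<rho>" and "i < n"
  shows "0 \<le> penalty_term_quad n \<sigma> \<nu> \<rho> dQ dS i"
proof -
  have "0 \<le> 1 - (\<rho> i)\<^sup>2"
    using assms unfolding admissible_params_def by (simp add: abs_square_le_1 less_imp_le)
  then show ?thesis
    unfolding penalty_term_quad_def by simp
qed

lemma objf_quad_nonneg:
  assumes "admissible_params n \<sigma> \<gamma>P c \<gamma> \<nu> \<rho>"
  shows "0 \<le> objf_quad n \<sigma> \<gamma>P c \<gamma> \<nu> \<rho> dQ dS"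
  unfolding objf_quad_def using assms own_term_quad_nonneg[OF assms] penalty_term_quad_nonneg[OF assms]
  by (intro add_nonneg_nonneg mult_nonneg_nonneg sum_nonneg) (auto simp: admissible_params_def)

lemma objf_quad_eq_0_iff:
  assumes adm: "admissible_params n \<sigma> \<gamma>P c \<gamma> \<nu> \<rho>"
  shows "objf_quad n \<sigma> \<gamma>P c \<gamma> \<nu> \<rho> dQ dS = 0 \<longleftrightarrow> (\<forall>i<n. \<forall>j<n. dQ i j = 0) \<and> (\<forall>i<n. dS i = 0)"
proof
  assume zero: "objf_quad n \<sigma> \<gamma>P c \<gamma> \<nu> \<rho> dQ dS = 0"
  have "own_term_quad n \<sigma> c \<gamma> \<nu> \<rho> dQ dS i = 0" if "i < n" for i
  proof -
    let ?own = "\<Sum>i<n. own_term_quad n \<sigma> c \<gamma> \<nu> \<rho> dQ dS i"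
    and ?penalty = "\<Sum>i<n. penalty_term_quad n \<sigma> \<nu> \<rho> dQ dS i"
    have n: "real n > 0"
      using that by simp
    have "0 \<le> ?own" and "0 \<le> ?penalty"
      using own_term_quad_nonneg[OF adm] penalty_term_quad_nonneg[OF adm] by (auto intro: sum_nonneg)
    then have "0 \<le> 1 / real n * ?own" and "0 \<le> \<gamma>P / (2 * (real n)\<^sup>2) * ?penalty"
      using adm unfolding admissible_params_def by simp_all
    then have "1 / real n * ?own = 0"
      using zero unfolding objf_quad_def by linarith
    then have "?own = 0"
      using n by simp
    then show ?thesis
      using sum_nonneg_eq_0_iff[of "{..<n}" "own_term_quad n \<sigma> c \<gamma> \<nu> \<rho> dQ dS"]
        own_term_quad_nonneg[OF adm] that by simp
  qed
  then show "(\<forall>i<n. \<forall>j<n. dQ i j = 0) \<and> (\<forall>i<n. dS i = 0)"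
    using own_term_quad_eq_0D[OF adm] by blast
next
  assume "(\<forall>i<n. \<forall>j<n. dQ i j = 0) \<and> (\<forall>i<n. dS i = 0)"
  then show "objf_quad n \<sigma> \<gamma>P c \<gamma> \<nu> \<rho> dQ dS = 0"
    by (simp add: objf_quad_def own_term_quad_def penalty_term_quad_def)
qed

lemma is_maximiser_iff_eq_critical_point:
  assumes adm: "admissible_params n \<sigma> \<gamma>P c \<gamma> \<nu> \<rho>"
    and crit: "\<And>dQ dS. objf_deriv n \<sigma> \<gamma>P c \<gamma> \<nu> \<rho> zQ zS dQ dS = 0"
  shows "is_maximiser n \<sigma> \<gamma>P c \<gamma> \<nu> \<rho> zQ' zS' \<longleftrightarrow>
    (\<forall>i<n. \<forall>j<n. zQ' i j = zQ i j) \<and> (\<forall>i<n. zS' i = zS i)"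
proof -
  let ?f = "objf n \<sigma> \<gamma>P c \<gamma> \<nu> \<rho>"
  let ?q = "\<lambda>zQ' zS'. objf_quad n \<sigma> \<gamma>P c \<gamma> \<nu> \<rho> (\<lambda>i j. zQ' i j - zQ i j) (\<lambda>i. zS' i - zS i)"
  have expand: "?f zQ' zS' = ?f zQ zS - ?q zQ' zS'" for zQ' zS'
    using objf_taylor[of n \<sigma> \<gamma>P c \<gamma> \<nu> \<rho> zQ "\<lambda>i j. zQ' i j - zQ i j" zS "\<lambda>i. zS' i - zS i"] crit
    by simp
  have q_nonneg: "0 \<le> ?q zQ' zS'" for zQ' zS'
    by (rule objf_quad_nonneg[OF adm])
  have "is_maximiser n \<sigma> \<gamma>P c \<gamma> \<nu> \<rho> zQ' zS' \<longleftrightarrow> ?q zQ' zS' = 0"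
  proof
    assume "is_maximiser n \<sigma> \<gamma>P c \<gamma> \<nu> \<rho> zQ' zS'"
    then have "?f zQ zS \<le> ?f zQ' zS'"
      unfolding is_maximiser_def by blast
    then show "?q zQ' zS' = 0"
      using expand[of zQ' zS'] q_nonneg[of zQ' zS'] by linarith
  next
    assume "?q zQ' zS' = 0"
    then have "?f zQ' zS' = ?f zQ zS"
      using expand[of zQ' zS'] by linarith
    moreover have "?f zQ'' zS'' \<le> ?f zQ zS" for zQ'' zS''
      using expand[of zQ'' zS''] q_nonneg[of zQ'' zS''] by linarith
    ultimately show "is_maximiser n \<sigma> \<gamma>P c \<gamma> \<nu> \<rho> zQ' zS'"
      unfolding is_maximiser_def by simp
  qed
  then show ?thesis
    unfolding objf_quad_eq_0_iff[OF adm] by simp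
qed

lemma sum_diag_offdiag:
  fixes f :: "nat \<Rightarrow> real"
  assumes "i < n"
  shows "(\<Sum>j<n. (if i = j then x else y) * f j) = y * (\<Sum>j<n. f j) + (x - y) * f i"
proof -
  have "(\<Sum>j<n. (if i = j then x else y) * f j) = (\<Sum>j<n. y * f j + (if i = j then (x - y) * f j else 0))"
    by (rule sum.cong) (auto simp: algebra_simps)
  then show ?thesis
    using assms by (simp add: sum.distrib sum_distrib_left)
qed

(* First-order conditions of f in the homogeneous case at the point with zQ i i = zd,
   zQ i j = zo (i \<noteq> j) and zS i = zs: derivatives along a diagonal minus an off-diagonal entry,
   along an off-diagonal entry, and along zS i. R is the common column sum of zQ and a the common
   bracket of the penalty terms. *)
definition sym_stationary ::
  "nat \<Rightarrow> real \<Rightarrow> real \<Rightarrow> real \<Rightarrow> real \<Rightarrow> real \<Rightarrow> real \<Rightarrow> real \<Rightarrow> real \<Rightarrow> real \<Rightarrow> bool" where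
  "sym_stationary n \<sigma> \<gamma>P c \<gamma> \<nu> \<rho> zd zo zs \<longleftrightarrow>
     (let R = zd + (real n - 1) * zo; a = \<nu> - \<nu> * R - \<rho> * \<sigma> * sqrt (real n) * zs in
        zd / c - 1 / c + \<gamma> * \<nu>\<^sup>2 * (zd - zo) = 0
      \<and> \<gamma> * \<nu>\<^sup>2 * zo + \<gamma> * \<sigma> * \<rho> * \<nu> * zs / sqrt (real n) = \<gamma>P / real n * a * \<nu>
      \<and> \<gamma> * \<sigma>\<^sup>2 * zs + \<gamma> * \<sigma> * \<rho> * \<nu> * R / sqrt (real n)
          = \<gamma>P * (a * \<rho> * \<sigma> / sqrt (real n) - (1 - \<rho>\<^sup>2) * \<sigma>\<^sup>2 * zs))"

lemma sym_row_sum: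
  assumes "i < n"
  shows "(\<Sum>j<n. if i = j then zd else zo) = zd + (real n - 1) * zo"
    and "(\<Sum>j<n. if j = i then zd else zo) = zd + (real n - 1) * zo"
  using sum_diag_offdiag[OF assms, of zd zo "\<lambda>_. 1"] by (simp_all add: algebra_simps eq_commute)

lemma own_term_deriv_sym:
  assumes "i < n"
  shows "own_term_deriv n \<sigma> (\<lambda>_. c) (\<lambda>_. \<gamma>) (\<lambda>_. \<nu>) (\<lambda>_. \<rho>) (\<lambda>i j. if i = j then zd else zo) (\<lambda>_. zs) dQ dS i
    = (zd / c - 1 / c + \<gamma> * \<nu>\<^sup>2 * (zd - zo)) * dQ i i
      + (\<gamma> * \<nu>\<^sup>2 * zo + \<gamma> * \<sigma> * \<rho> * \<nu> * zs / sqrt (real n)) * (\<Sum>j<n. dQ i j)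
      + (\<gamma> * \<sigma>\<^sup>2 * zs + \<gamma> * \<sigma> * \<rho> * \<nu> * (zd + (real n - 1) * zo) / sqrt (real n)) * dS i"
proof -
  have diag: "(\<Sum>j<n. \<nu>\<^sup>2 * (if i = j then zd else zo) * dQ i j) = \<nu>\<^sup>2 * (zo * (\<Sum>j<n. dQ i j) + (zd - zo) * dQ i i)"
    using sum_diag_offdiag[OF assms, of zd zo "dQ i"] by (simp add: mult.assoc flip: sum_distrib_left)
  show ?thesis
    unfolding own_term_deriv_def diag sum_distrib_left[symmetric] sym_row_sum[OF assms]
    by (simp add: algebra_simps add_divide_distrib diff_divide_distrib)
qed

lemma penalty_term_deriv_sym:
  fixes n :: nat and \<sigma> \<nu> \<rho> zd zo zs :: real
  assumes "i < n"
  defines "a \<equiv> \<nu> - \<nu> * (zd + (real n - 1) * zo) - \<rho> * \<sigma> * sqrt (real n) * zs"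
  shows "penalty_term_deriv n \<sigma> (\<lambda>_. \<nu>) (\<lambda>_. \<rho>) (\<lambda>i j. if i = j then zd else zo) (\<lambda>_. zs) dQ dS i
    = - 2 * (a * \<nu> * (\<Sum>j<n. dQ j i) + (a * \<rho> * \<sigma> / sqrt (real n) - (1 - \<rho>\<^sup>2) * \<sigma>\<^sup>2 * zs) * (\<Sum>j<n. dS j))"
proof -
  have "\<rho> * \<sigma> / sqrt (real n) * (\<Sum>j<n. zs) = \<rho> * \<sigma> * (real n / sqrt (real n)) * zs"
    by simp
  also have "\<dots> = \<rho> * \<sigma> * sqrt (real n) * zs"
    by (simp add: real_div_sqrt)
  finally have shift: "\<rho> * \<sigma> / sqrt (real n) * (\<Sum>j<n. zs) = \<rho> * \<sigma> * sqrt (real n) * zs" .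
  have mean: "2 * (1 - \<rho>\<^sup>2) * \<sigma>\<^sup>2 / real n * (\<Sum>j<n. zs) = 2 * (1 - \<rho>\<^sup>2) * \<sigma>\<^sup>2 * zs"
    using assms(1) by simp
  show ?thesis
    unfolding penalty_term_deriv_def sym_row_sum[OF assms(1)] shift mean a_def[symmetric]
    by (simp add: algebra_simps)
qed

lemma objf_deriv_sym_stationary:
  assumes "sym_stationary n \<sigma> \<gamma>P c \<gamma> \<nu> \<rho> zd zo zs"
  shows "objf_deriv n \<sigma> \<gamma>P (\<lambda>_. c) (\<lambda>_. \<gamma>) (\<lambda>_. \<nu>) (\<lambda>_. \<rho>) (\<lambda>i j. if i = j then zd else zo) (\<lambda>_. zs) dQ dS = 0"
proof -
  define R where "R = zd + (real n - 1) * zo"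
  define a where "a = \<nu> - \<nu> * R - \<rho> * \<sigma> * sqrt (real n) * zs"
  define D where "D = (\<Sum>i<n. \<Sum>j<n. dQ i j)"
  define E where "E = (\<Sum>i<n. dS i)"
  from assms have diag: "zd / c - 1 / c + \<gamma> * \<nu>\<^sup>2 * (zd - zo) = 0"
    and offdiag: "\<gamma> * \<nu>\<^sup>2 * zo + \<gamma> * \<sigma> * \<rho> * \<nu> * zs / sqrt (real n) = \<gamma>P / real n * a * \<nu>"
    and stock: "\<gamma> * \<sigma>\<^sup>2 * zs + \<gamma> * \<sigma> * \<rho> * \<nu> * R / sqrt (real n)
      = \<gamma>P * (a * \<rho> * \<sigma> / sqrt (real n) - (1 - \<rho>\<^sup>2) * \<sigma>\<^sup>2 * zs)"
    unfolding sym_stationary_def Let_def R_def[symmetric] a_def[symmetric] by auto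
  have own: "(\<Sum>i<n. own_term_deriv n \<sigma> (\<lambda>_. c) (\<lambda>_. \<gamma>) (\<lambda>_. \<nu>) (\<lambda>_. \<rho>) (\<lambda>i j. if i = j then zd else zo) (\<lambda>_. zs) dQ dS i)
      = \<gamma>P / real n * a * \<nu> * D + \<gamma>P * (a * \<rho> * \<sigma> / sqrt (real n) - (1 - \<rho>\<^sup>2) * \<sigma>\<^sup>2 * zs) * E"
    by (simp add: own_term_deriv_sym diag offdiag stock[unfolded R_def] D_def E_def sum.distrib sum_distrib_left)
  have penalty: "(\<Sum>i<n. penalty_term_deriv n \<sigma> (\<lambda>_. \<nu>) (\<lambda>_. \<rho>) (\<lambda>i j. if i = j then zd else zo) (\<lambda>_. zs) dQ dS i)
      = - 2 * (a * \<nu> * D + real n * (a * \<rho> * \<sigma> / sqrt (real n) - (1 - \<rho>\<^sup>2) * \<sigma>\<^sup>2 * zs) * E)"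
  proof -
    have "(\<Sum>i<n. \<Sum>j<n. dQ j i) = D"
      unfolding D_def by (rule sum.swap)
    then show ?thesis
      by (simp add: penalty_term_deriv_sym a_def[unfolded R_def, symmetric] E_def[symmetric]
          sum_subtractf sum_negf flip: sum_distrib_left)
  qed
  show ?thesis
    unfolding objf_deriv_def own penalty by (cases "n = 0") (simp_all add: field_simps power2_eq_square)
qed

lemma hA_pos: "c > 0 \<Longrightarrow> \<gamma> > 0 \<Longrightarrow> \<nu> > 0 \<Longrightarrow> hA c \<gamma> \<nu> > 0"
  unfolding hA_def by (simp add: add_pos_pos)

lemma h\<delta>_eq:
  assumes "c > 0" "\<gamma> > 0" "\<nu> > 0"
  shows "h\<delta> c \<gamma> \<nu> = 1 - \<gamma> / hA c \<gamma> \<nu>"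
proof -
  have "1 - \<gamma> / hA c \<gamma> \<nu> = (hA c \<gamma> \<nu> - \<gamma>) / hA c \<gamma> \<nu>"
    using hA_pos[OF assms] by (simp add: diff_divide_distrib)
  then show ?thesis
    unfolding h\<delta>_def by (simp add: hA_def)
qed

lemma h\<kappa>_eq:
  assumes "c > 0" "\<gamma> > 0" "\<nu> > 0"
  shows "h\<kappa> n \<gamma>P c \<gamma> \<nu> = 1 + \<gamma>P / real n * ((real n - 1) / \<gamma> + 1 / hA c \<gamma> \<nu>)"
  using hA_pos[OF assms] assms unfolding h\<kappa>_def h\<kappa>t_def
  by (cases "n = 0") (simp_all add: field_simps)

lemma h\<kappa>_pos:
  assumes "n \<ge> 1" "\<gamma>P > 0" "c > 0" "\<gamma> > 0" "\<nu> > 0"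
  shows "h\<kappa> n \<gamma>P c \<gamma> \<nu> > 0"
  using assms hA_pos[of c \<gamma> \<nu>] unfolding h\<kappa>_eq[OF assms(3-5)]
  by (intro add_pos_nonneg mult_nonneg_nonneg add_nonneg_nonneg) auto

lemma h\<kappa>_identity:
  assumes "n \<ge> 1" "c > 0" "\<gamma> > 0" "\<nu> > 0"
  shows "\<gamma> * (h\<kappa> n \<gamma>P c \<gamma> \<nu> - 1) + \<gamma>P * h\<delta> c \<gamma> \<nu> / real n = \<gamma>P"
  using assms hA_pos[of c \<gamma> \<nu>] unfolding h\<kappa>_eq[OF assms(2-4)] h\<delta>_eq[OF assms(2-4)]
  by (simp add: field_simps)

lemma h\<Delta>_eq:
  assumes "n \<ge> 1" "\<gamma>P > 0" "c > 0" "\<gamma> > 0" "\<nu> > 0"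
  shows "h\<Delta> n \<gamma>P c \<gamma> \<nu> \<rho> = (\<gamma> + \<gamma>P) * (1 - \<rho>\<^sup>2 + \<rho>\<^sup>2 * h\<delta> c \<gamma> \<nu> / (real n * h\<kappa> n \<gamma>P c \<gamma> \<nu>))"
proof -
  let ?\<delta> = "h\<delta> c \<gamma> \<nu>" and ?\<kappa> = "h\<kappa> n \<gamma>P c \<gamma> \<nu>"
  have "\<gamma> * \<rho>\<^sup>2 * ?\<delta> / real n + \<gamma>P * \<rho>\<^sup>2 * ?\<delta>\<^sup>2 / ((real n)\<^sup>2 * ?\<kappa>)
      = \<rho>\<^sup>2 * ?\<delta> / (real n * ?\<kappa>) * (\<gamma> * ?\<kappa> + \<gamma>P * ?\<delta> / real n)"
    using h\<kappa>_pos[OF assms] assms(1) by (simp add: field_simps power2_eq_square)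
  also have "\<gamma> * ?\<kappa> + \<gamma>P * ?\<delta> / real n = \<gamma> + \<gamma>P"
    using h\<kappa>_identity[OF assms(1,3-5), of \<gamma>P] by (simp add: algebra_simps)
  finally show ?thesis
    unfolding h\<Delta>_def by (simp add: algebra_simps)
qed

lemma h\<Delta>_pos:
  assumes "n \<ge> 1" "\<gamma>P > 0" "c > 0" "\<gamma> > 0" "\<nu> > 0" "\<bar>\<rho>\<bar> < 1"
  shows "h\<Delta> n \<gamma>P c \<gamma> \<nu> \<rho> > 0"
proof -
  have "\<rho>\<^sup>2 < 1" using assms(6) by (simp add: abs_square_less_1)
  moreover have "h\<delta> c \<gamma> \<nu> > 0" using hA_pos[of c \<gamma> \<nu>] assms unfolding h\<delta>_def by simp
  ultimately show ?thesis
    using h\<kappa>_pos[OF assms(1-5)] assms unfolding h\<Delta>_def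
    by (intro add_pos_nonneg) auto
qed

lemma sym_candidate_residual:
  fixes n :: nat and \<sigma> \<gamma>P c \<gamma> \<nu> \<rho> zs :: real
  assumes "n \<ge> 1" "\<gamma>P > 0" "c > 0" "\<gamma> > 0" "\<nu> > 0"
  defines "K \<equiv> 1 / h\<kappa> n \<gamma>P c \<gamma> \<nu> * (\<gamma> * \<nu> / hA c \<gamma> \<nu> - h\<beta> n \<sigma> \<rho> * h\<delta> c \<gamma> \<nu> * zs)"
  defines "zo \<equiv> 1 / \<nu> * (h\<alpha> n \<gamma>P \<gamma> * K - h\<beta> n \<sigma> \<rho> * zs)"
  defines "zd \<equiv> 1 / (\<nu> * hA c \<gamma> \<nu>) * (\<gamma>P / real n * K - \<gamma> * h\<beta> n \<sigma> \<rho> * zs + 1 / (c * \<nu>))"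
  shows "\<nu> - \<nu> * (zd + (real n - 1) * zo) - \<rho> * \<sigma> * sqrt (real n) * zs = K"
proof -
  define A where "A = hA c \<gamma> \<nu>"
  define \<beta> where "\<beta> = h\<beta> n \<sigma> \<rho>"
  define \<kappa> where "\<kappa> = h\<kappa> n \<gamma>P c \<gamma> \<nu>"
  have A: "A > 0" "A - \<gamma> = 1 / (c * \<nu>\<^sup>2)"
    using hA_pos assms unfolding A_def hA_def by auto
  have n: "real n > 0"
    using assms by simp
  have \<kappa>: "\<kappa> > 0"
    unfolding \<kappa>_def using h\<kappa>_pos assms by blast
  have "\<rho> * \<sigma> * sqrt (real n) = real n * \<beta>"
    unfolding \<beta>_def h\<beta>_def using n by (simp add: field_simps)
  then have "\<nu> - \<nu> * (zd + (real n - 1) * zo) - \<rho> * \<sigma> * sqrt (real n) * zs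
      = \<nu> - \<nu> * zd - (real n - 1) * (\<nu> * zo) - real n * \<beta> * zs"
    by (simp add: algebra_simps)
  also have "\<dots> = \<gamma> * \<nu> / A - \<beta> * h\<delta> c \<gamma> \<nu> * zs - K * (\<kappa> - 1)"
  proof -
    have c\<nu>: "1 / (c * \<nu>) = \<nu> * (A - \<gamma>)"
      using A(2) assms by (simp add: field_simps power2_eq_square)
    show ?thesis
      using A(1) n assms(1-5) unfolding zd_def zo_def c\<nu> A_def[symmetric] \<beta>_def[symmetric] \<kappa>_def
        h\<kappa>_eq[OF assms(3-5)] h\<delta>_eq[OF assms(3-5)] h\<alpha>_def
      by (simp add: field_simps)
  qed
  also have "\<dots> = K"
    using \<kappa> A(1) unfolding K_def A_def[symmetric] \<beta>_def[symmetric] \<kappa>_def[symmetric] by (simp add: field_simps)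
  finally show ?thesis .
qed

lemma h\<kappa>_shift:
  assumes "n \<ge> 1" "c > 0" "\<gamma> > 0" "\<nu> > 0"
  shows "hA c \<gamma> \<nu> * c * \<nu>\<^sup>2 * (h\<kappa> n \<gamma>P c \<gamma> \<nu> - (\<gamma> + \<gamma>P) / hA c \<gamma> \<nu>)
    = h\<kappa> n \<gamma>P c \<gamma> \<nu> - \<gamma>P / (real n * hA c \<gamma> \<nu>)"
proof -
  let ?A = "hA c \<gamma> \<nu>" and ?\<kappa> = "h\<kappa> n \<gamma>P c \<gamma> \<nu>"
  have A: "?A > 0"
    using hA_pos assms by blast
  have "?A * c * \<nu>\<^sup>2 = \<gamma> * c * \<nu>\<^sup>2 + 1"
    using assms unfolding hA_def by (simp add: field_simps)
  moreover have c\<nu>\<delta>: "c * \<nu>\<^sup>2 * h\<delta> c \<gamma> \<nu> = 1 / ?A"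
    using A assms unfolding h\<delta>_def by (simp add: field_simps)
  ultimately have "?A * c * \<nu>\<^sup>2 * (?\<kappa> - (\<gamma> + \<gamma>P) / ?A) = ?\<kappa> + c * \<nu>\<^sup>2 * (\<gamma> * (?\<kappa> - 1) - \<gamma>P)"
    using A by (simp add: field_simps)
  also have "\<gamma> * (?\<kappa> - 1) - \<gamma>P = - \<gamma>P * h\<delta> c \<gamma> \<nu> / real n"
    using h\<kappa>_identity[OF assms, of \<gamma>P] by (simp add: algebra_simps)
  finally show ?thesis
    using c\<nu>\<delta> by (simp add: algebra_simps)
qed

(* Multiplied by kappa, the zS condition with a = K becomes linear in zs, with coefficient
   sigma^2 kappa Delta. *)
lemma sym_candidate_stock_scaled:
  fixes n :: nat and \<sigma> \<gamma>P c \<gamma> \<nu> \<rho> zs :: real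
  assumes "n \<ge> 1" "\<gamma>P > 0" "c > 0" "\<gamma> > 0" "\<nu> > 0"
  defines "K \<equiv> 1 / h\<kappa> n \<gamma>P c \<gamma> \<nu> * (\<gamma> * \<nu> / hA c \<gamma> \<nu> - h\<beta> n \<sigma> \<rho> * h\<delta> c \<gamma> \<nu> * zs)"
  shows "h\<kappa> n \<gamma>P c \<gamma> \<nu> * ((\<gamma> + \<gamma>P) * (1 - \<rho>\<^sup>2) * \<sigma>\<^sup>2 * zs + h\<beta> n \<sigma> \<rho> * (\<gamma> * \<nu> - (\<gamma> + \<gamma>P) * K))
    = \<sigma>\<^sup>2 * zs * (h\<kappa> n \<gamma>P c \<gamma> \<nu> * h\<Delta> n \<gamma>P c \<gamma> \<nu> \<rho>)
      + h\<beta> n \<sigma> \<rho> * \<gamma> * \<nu> * (h\<kappa> n \<gamma>P c \<gamma> \<nu> - (\<gamma> + \<gamma>P) / hA c \<gamma> \<nu>)"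
proof -
  define A where "A = hA c \<gamma> \<nu>"
  define \<delta> where "\<delta> = h\<delta> c \<gamma> \<nu>"
  define \<beta> where "\<beta> = h\<beta> n \<sigma> \<rho>"
  define \<kappa> where "\<kappa> = h\<kappa> n \<gamma>P c \<gamma> \<nu>"
  have n: "real n > 0"
    using assms(1) by simp
  have A: "A > 0"
    unfolding A_def using hA_pos assms(3-5) by blast
  have \<kappa>: "\<kappa> > 0"
    unfolding \<kappa>_def using h\<kappa>_pos assms(1-5) by blast
  have \<beta>2: "\<beta>\<^sup>2 = \<sigma>\<^sup>2 * \<rho>\<^sup>2 / real n"
    unfolding \<beta>_def h\<beta>_def using n by (simp add: power_divide power_mult_distrib)
  have \<kappa>\<Delta>: "\<kappa> * h\<Delta> n \<gamma>P c \<gamma> \<nu> \<rho> = (\<gamma> + \<gamma>P) * ((1 - \<rho>\<^sup>2) * \<kappa> + \<rho>\<^sup>2 * \<delta> / real n)"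
    unfolding h\<Delta>_eq[OF assms(1-5)] \<kappa>_def[symmetric] \<delta>_def[symmetric] using \<kappa> n
    by (simp add: field_simps)
  have K\<kappa>: "K * \<kappa> = \<gamma> * \<nu> / A - \<beta> * \<delta> * zs"
    unfolding K_def A_def[symmetric] \<beta>_def[symmetric] \<delta>_def[symmetric] \<kappa>_def[symmetric]
    using \<kappa> by simp
  have "\<kappa> * ((\<gamma> + \<gamma>P) * (1 - \<rho>\<^sup>2) * \<sigma>\<^sup>2 * zs + \<beta> * (\<gamma> * \<nu> - (\<gamma> + \<gamma>P) * K))
      = (\<gamma> + \<gamma>P) * (1 - \<rho>\<^sup>2) * \<sigma>\<^sup>2 * zs * \<kappa> + \<beta> * (\<gamma> * \<nu> * \<kappa> - (\<gamma> + \<gamma>P) * (K * \<kappa>))"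
    by (simp add: algebra_simps)
  also have "\<dots> = \<sigma>\<^sup>2 * zs * (\<kappa> * h\<Delta> n \<gamma>P c \<gamma> \<nu> \<rho>) + \<beta> * \<gamma> * \<nu> * (\<kappa> - (\<gamma> + \<gamma>P) / A)"
    unfolding K\<kappa> \<kappa>\<Delta> using \<beta>2 A n by (simp add: field_simps power2_eq_square, algebra)
  finally show ?thesis
    unfolding A_def \<beta>_def \<kappa>_def .
qed

lemma sym_candidate_zs:
  fixes n :: nat and \<sigma> \<gamma>P c \<gamma> \<nu> \<rho> :: real
  assumes "n \<ge> 1" "\<sigma> > 0" "\<gamma>P > 0" "c > 0" "\<gamma> > 0" "\<nu> > 0" "\<bar>\<rho>\<bar> < 1"
  defines "zs \<equiv> - (\<rho> * \<gamma>) / (hA c \<gamma> \<nu> * c * \<sigma> * \<nu> * sqrt (real n) * h\<Delta> n \<gamma>P c \<gamma> \<nu> \<rho>)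
      * (1 - \<gamma>P / (real n * h\<kappa>t n \<gamma>P c \<gamma> \<nu>))"
  shows "\<sigma>\<^sup>2 * zs * (h\<kappa> n \<gamma>P c \<gamma> \<nu> * h\<Delta> n \<gamma>P c \<gamma> \<nu> \<rho>)
      + h\<beta> n \<sigma> \<rho> * \<gamma> * \<nu> * (h\<kappa> n \<gamma>P c \<gamma> \<nu> - (\<gamma> + \<gamma>P) / hA c \<gamma> \<nu>) = 0"
proof -
  define A where "A = hA c \<gamma> \<nu>"
  define \<kappa> where "\<kappa> = h\<kappa> n \<gamma>P c \<gamma> \<nu>"
  define \<Delta> where "\<Delta> = h\<Delta> n \<gamma>P c \<gamma> \<nu> \<rho>"
  have n: "real n > 0"
    using assms(1) by simp
  have A: "A > 0"
    unfolding A_def using hA_pos assms(4-6) by blast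
  have \<kappa>: "\<kappa> > 0"
    unfolding \<kappa>_def using h\<kappa>_pos assms(1,3-6) by blast
  have \<Delta>: "\<Delta> > 0"
    unfolding \<Delta>_def using h\<Delta>_pos assms(1,3-7) by blast
  have "h\<kappa>t n \<gamma>P c \<gamma> \<nu> = A * \<kappa>"
    unfolding \<kappa>_def h\<kappa>_def A_def[symmetric] using A by simp
  then have scaled: "\<sigma>\<^sup>2 * zs * (\<kappa> * \<Delta>) = - h\<beta> n \<sigma> \<rho> * \<gamma> * \<nu> * (\<kappa> - \<gamma>P / (real n * A)) / (A * c * \<nu>\<^sup>2)"
    unfolding zs_def h\<beta>_def A_def[symmetric] \<Delta>_def[symmetric]
    using assms(1-6) n A \<kappa> \<Delta> by (simp add: field_simps power2_eq_square)
  have "A * c * \<nu>\<^sup>2 * (\<kappa> - (\<gamma> + \<gamma>P) / A) = \<kappa> - \<gamma>P / (real n * A)"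
    unfolding A_def \<kappa>_def by (rule h\<kappa>_shift[OF assms(1,4-6)])
  then have gap: "\<kappa> - (\<gamma> + \<gamma>P) / A = (\<kappa> - \<gamma>P / (real n * A)) / (A * c * \<nu>\<^sup>2)"
    using A assms(4,6) by (simp add: field_simps)
  show ?thesis
    unfolding A_def[symmetric] \<kappa>_def[symmetric] \<Delta>_def[symmetric] scaled gap by simp
qed

lemma sym_candidate_zS_condition:
  fixes n :: nat and \<sigma> \<gamma>P c \<gamma> \<nu> \<rho> :: real
  assumes "n \<ge> 1" "\<sigma> > 0" "\<gamma>P > 0" "c > 0" "\<gamma> > 0" "\<nu> > 0" "\<bar>\<rho>\<bar> < 1"
  defines "zs \<equiv> - (\<rho> * \<gamma>) / (hA c \<gamma> \<nu> * c * \<sigma> * \<nu> * sqrt (real n) * h\<Delta> n \<gamma>P c \<gamma> \<nu> \<rho>)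
      * (1 - \<gamma>P / (real n * h\<kappa>t n \<gamma>P c \<gamma> \<nu>))"
  defines "K \<equiv> 1 / h\<kappa> n \<gamma>P c \<gamma> \<nu> * (\<gamma> * \<nu> / hA c \<gamma> \<nu> - h\<beta> n \<sigma> \<rho> * h\<delta> c \<gamma> \<nu> * zs)"
  defines "zo \<equiv> 1 / \<nu> * (h\<alpha> n \<gamma>P \<gamma> * K - h\<beta> n \<sigma> \<rho> * zs)"
  defines "zd \<equiv> 1 / (\<nu> * hA c \<gamma> \<nu>) * (\<gamma>P / real n * K - \<gamma> * h\<beta> n \<sigma> \<rho> * zs + 1 / (c * \<nu>))"
  shows "\<gamma> * \<sigma>\<^sup>2 * zs + \<gamma> * \<sigma> * \<rho> * \<nu> * (zd + (real n - 1) * zo) / sqrt (real n)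
    = \<gamma>P * (K * \<rho> * \<sigma> / sqrt (real n) - (1 - \<rho>\<^sup>2) * \<sigma>\<^sup>2 * zs)"
proof -
  define \<beta> where "\<beta> = h\<beta> n \<sigma> \<rho>"
  have \<beta>: "\<sigma> * \<rho> / sqrt (real n) = \<beta>"
    unfolding \<beta>_def h\<beta>_def ..
  have "\<nu> - \<nu> * (zd + (real n - 1) * zo) - \<rho> * \<sigma> * sqrt (real n) * zs = K"
    unfolding zd_def zo_def K_def by (rule sym_candidate_residual[OF assms(1,3-6)])
  then have R: "\<nu> * (zd + (real n - 1) * zo) = \<nu> - K - \<rho> * \<sigma> * sqrt (real n) * zs"
    by simp
  have "h\<kappa> n \<gamma>P c \<gamma> \<nu> * ((\<gamma> + \<gamma>P) * (1 - \<rho>\<^sup>2) * \<sigma>\<^sup>2 * zs + \<beta> * (\<gamma> * \<nu> - (\<gamma> + \<gamma>P) * K)) = 0"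
    unfolding \<beta>_def K_def sym_candidate_stock_scaled[OF assms(1,3-6)] zs_def
    by (rule sym_candidate_zs[OF assms(1-7)])
  then have stock: "(\<gamma> + \<gamma>P) * (1 - \<rho>\<^sup>2) * \<sigma>\<^sup>2 * zs + \<beta> * (\<gamma> * \<nu> - (\<gamma> + \<gamma>P) * K) = 0"
    using h\<kappa>_pos[OF assms(1,3-6)] by simp
  have "\<gamma> * \<sigma>\<^sup>2 * zs + \<gamma> * \<sigma> * \<rho> * \<nu> * (zd + (real n - 1) * zo) / sqrt (real n)
      = \<gamma> * \<sigma>\<^sup>2 * zs + \<gamma> * \<beta> * (\<nu> * (zd + (real n - 1) * zo))"
    unfolding \<beta>[symmetric] by (simp add: algebra_simps add_divide_distrib diff_divide_distrib)
  also have "\<dots> = \<gamma> * \<sigma>\<^sup>2 * zs + \<gamma> * \<beta> * (\<nu> - K) - \<gamma> * (\<beta> * (\<rho> * \<sigma> * sqrt (real n))) * zs"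
    unfolding R by (simp add: algebra_simps)
  also have "\<beta> * (\<rho> * \<sigma> * sqrt (real n)) = \<rho>\<^sup>2 * \<sigma>\<^sup>2"
    unfolding \<beta>[symmetric] using assms(1) by (simp add: power2_eq_square)
  also have "\<gamma> * \<sigma>\<^sup>2 * zs + \<gamma> * \<beta> * (\<nu> - K) - \<gamma> * (\<rho>\<^sup>2 * \<sigma>\<^sup>2) * zs
      = \<gamma>P * (K * \<beta> - (1 - \<rho>\<^sup>2) * \<sigma>\<^sup>2 * zs)"
    using stock by (simp add: algebra_simps)
  finally show ?thesis
    unfolding \<beta>[symmetric] by (simp add: algebra_simps)
qed

lemma sym_stationary_candidate:
  fixes n :: nat and \<sigma> \<gamma>P c \<gamma> \<nu> \<rho> :: real
  assumes "n \<ge> 1" "\<sigma> > 0" "\<gamma>P > 0" "c > 0" "\<gamma> > 0" "\<nu> > 0" "\<bar>\<rho>\<bar> < 1"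
  defines "zs \<equiv> - (\<rho> * \<gamma>) / (hA c \<gamma> \<nu> * c * \<sigma> * \<nu> * sqrt (real n) * h\<Delta> n \<gamma>P c \<gamma> \<nu> \<rho>)
      * (1 - \<gamma>P / (real n * h\<kappa>t n \<gamma>P c \<gamma> \<nu>))"
  defines "K \<equiv> 1 / h\<kappa> n \<gamma>P c \<gamma> \<nu> * (\<gamma> * \<nu> / hA c \<gamma> \<nu> - h\<beta> n \<sigma> \<rho> * h\<delta> c \<gamma> \<nu> * zs)"
  defines "zo \<equiv> 1 / \<nu> * (h\<alpha> n \<gamma>P \<gamma> * K - h\<beta> n \<sigma> \<rho> * zs)"
  defines "zd \<equiv> 1 / (\<nu> * hA c \<gamma> \<nu>) * (\<gamma>P / real n * K - \<gamma> * h\<beta> n \<sigma> \<rho> * zs + 1 / (c * \<nu>))"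
  shows "sym_stationary n \<sigma> \<gamma>P c \<gamma> \<nu> \<rho> zd zo zs"
proof -
  define A where "A = hA c \<gamma> \<nu>"
  define \<beta> where "\<beta> = h\<beta> n \<sigma> \<rho>"
  have A: "A > 0" "A = \<gamma> + 1 / (c * \<nu>\<^sup>2)"
    unfolding A_def using hA_pos assms(4-6) by (auto simp: hA_def)
  have offdiag: "\<gamma> * \<nu> * zo = \<gamma>P / real n * K - \<gamma> * \<beta> * zs"
    unfolding zo_def \<beta>_def h\<alpha>_def using assms(5,6) by (simp add: field_simps)
  have diag: "\<nu> * A * zd = \<gamma>P / real n * K - \<gamma> * \<beta> * zs + 1 / (c * \<nu>)"
    unfolding zd_def \<beta>_def A_def[symmetric] using A(1) assms(6) by simp
  have "zd / c - 1 / c + \<gamma> * \<nu>\<^sup>2 * (zd - zo) = \<nu> * (\<nu> * A * zd - \<gamma> * \<nu> * zo) - 1 / c"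
    unfolding A(2) using assms(4,6) by (simp add: field_simps power2_eq_square)
  also have "\<dots> = 0"
    unfolding diag offdiag using assms(6) by simp
  finally have "zd / c - 1 / c + \<gamma> * \<nu>\<^sup>2 * (zd - zo) = 0" .
  moreover have "\<gamma> * \<nu>\<^sup>2 * zo + \<gamma> * \<sigma> * \<rho> * \<nu> * zs / sqrt (real n) = \<gamma>P / real n * K * \<nu>"
    using arg_cong[OF offdiag, of "\<lambda>x. \<nu> * x"] unfolding \<beta>_def h\<beta>_def
    by (simp add: algebra_simps power2_eq_square)
  moreover have "\<nu> - \<nu> * (zd + (real n - 1) * zo) - \<rho> * \<sigma> * sqrt (real n) * zs = K"
    unfolding zd_def zo_def K_def by (rule sym_candidate_residual[OF assms(1,3-6)])
  moreover have "\<gamma> * \<sigma>\<^sup>2 * zs + \<gamma> * \<sigma> * \<rho> * \<nu> * (zd + (real n - 1) * zo) / sqrt (real n)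
      = \<gamma>P * (K * \<rho> * \<sigma> / sqrt (real n) - (1 - \<rho>\<^sup>2) * \<sigma>\<^sup>2 * zs)"
    unfolding zd_def zo_def K_def zs_def by (rule sym_candidate_zS_condition[OF assms(1-7)])
  ultimately show ?thesis
    unfolding sym_stationary_def Let_def by simp
qed

lemma sym_stationary_unique_maximiser:
  assumes adm: "admissible_params n \<sigma> \<gamma>P (\<lambda>_. c) (\<lambda>_. \<gamma>) (\<lambda>_. \<nu>) (\<lambda>_. \<rho>)"
    and "sym_stationary n \<sigma> \<gamma>P c \<gamma> \<nu> \<rho> zd zo zs"
  shows "(\<exists>zQ zS. is_maximiser n \<sigma> \<gamma>P (\<lambda>_. c) (\<lambda>_. \<gamma>) (\<lambda>_. \<nu>) (\<lambda>_. \<rho>) zQ zS)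
    \<and> (\<forall>zQ zS. is_maximiser n \<sigma> \<gamma>P (\<lambda>_. c) (\<lambda>_. \<gamma>) (\<lambda>_. \<nu>) (\<lambda>_. \<rho>) zQ zS \<longrightarrow>
        (\<forall>i<n. zS i = zs) \<and> (\<forall>i<n. zQ i i = zd) \<and> (\<forall>i<n. \<forall>j<n. i \<noteq> j \<longrightarrow> zQ i j = zo))"
proof -
  note iff = is_maximiser_iff_eq_critical_point[OF adm objf_deriv_sym_stationary[OF assms(2)]]
  have "is_maximiser n \<sigma> \<gamma>P (\<lambda>_. c) (\<lambda>_. \<gamma>) (\<lambda>_. \<nu>) (\<lambda>_. \<rho>) (\<lambda>i j. if i = j then zd else zo) (\<lambda>_. zs)"
    by (simp add: iff)
  moreover have "(\<forall>i<n. zS i = zs) \<and> (\<forall>i<n. zQ i i = zd) \<and> (\<forall>i<n. \<forall>j<n. i \<noteq> j \<longrightarrow> zQ i j = zo)"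
    if "is_maximiser n \<sigma> \<gamma>P (\<lambda>_. c) (\<lambda>_. \<gamma>) (\<lambda>_. \<nu>) (\<lambda>_. \<rho>) zQ zS" for zQ zS
    using that by (auto simp: iff)
  ultimately show ?thesis
    by blast
qed

theorem mainTheorem2:
  fixes n :: nat and \<sigma> \<gamma>P c \<gamma> \<nu> \<rho> :: real
  assumes "n \<ge> 1" and "\<sigma> > 0" and "\<gamma>P > 0" and "c > 0" and "\<gamma> > 0" and "\<nu> > 0"
    and "-1 < \<rho>" and "\<rho> < 1"
  shows "h\<Delta> n \<gamma>P c \<gamma> \<nu> \<rho> > 0
    \<and> (\<exists>zQ zS. is_maximiser n \<sigma> \<gamma>P (\<lambda>_. c) (\<lambda>_. \<gamma>) (\<lambda>_. \<nu>) (\<lambda>_. \<rho>) zQ zS)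
    \<and> (\<forall>zQ zS. is_maximiser n \<sigma> \<gamma>P (\<lambda>_. c) (\<lambda>_. \<gamma>) (\<lambda>_. \<nu>) (\<lambda>_. \<rho>) zQ zS \<longrightarrow>
        (let A = hA c \<gamma> \<nu>; \<delta> = h\<delta> c \<gamma> \<nu>; \<alpha> = h\<alpha> n \<gamma>P \<gamma>; \<beta> = h\<beta> n \<sigma> \<rho>;
             \<kappa>t = h\<kappa>t n \<gamma>P c \<gamma> \<nu>; \<kappa> = h\<kappa> n \<gamma>P c \<gamma> \<nu>; \<Delta> = h\<Delta> n \<gamma>P c \<gamma> \<nu> \<rho>;
             zs = - (\<rho> * \<gamma>) / (A * c * \<sigma> * \<nu> * sqrt (real n) * \<Delta>) * (1 - \<gamma>P / (real n * \<kappa>t));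
             K = 1 / \<kappa> * (\<gamma> * \<nu> / A - \<beta> * \<delta> * zs);
             zo = 1 / \<nu> * (\<alpha> * K - \<beta> * zs);
             zd = 1 / (\<nu> * A) * (\<gamma>P / real n * K - \<gamma> * \<beta> * zs + 1 / (c * \<nu>))
         in (\<forall>i<n. zS i = zs) \<and> (\<forall>i<n. zQ i i = zd)
            \<and> (\<forall>i<n. \<forall>j<n. i \<noteq> j \<longrightarrow> zQ i j = zo)))"
proof -
  have \<rho>: "\<bar>\<rho>\<bar> < 1"
    using assms(7,8) by simp
  have adm: "admissible_params n \<sigma> \<gamma>P (\<lambda>_. c) (\<lambda>_. \<gamma>) (\<lambda>_. \<nu>) (\<lambda>_. \<rho>)"
    using assms \<rho> by (simp add: admissible_params_def)
  show ?thesis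
    unfolding Let_def
    using h\<Delta>_pos[OF assms(1,3-6) \<rho>]
      sym_stationary_unique_maximiser[OF adm sym_stationary_candidate[OF assms(1-6) \<rho>]]
    by blast
qed

end
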